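(* Let $M_n=V\,{\rm diag}(\Lambda_{n1},\dots,\Lambda_{nd})V^{-1}$, $n=1,\dots,N$, with $V$ real invertible and $\Lambda_{ni}$ real, let $\gamma=\min_{j<j'}\sum_{n=1}^N(\Lambda_{nj}-\Lambda_{nj'})^2$, and let $U_\circ$ be an orthogonal matrix with ${\rm low}(U_\circ^TM_nU_\circ)=0$ for all $n$. Then for every skew-symmetric $X$, $$\sum_{n=1}^N{\rm Tr}(\dot g_n^T\dot g_n)\ge\varepsilon\|X\|^2,\qquad \dot g_n={\rm low}\big([U_\circ^TM_nU_\circ,X]\big),\qquad \varepsilon=\frac{\gamma}{2\kappa(V)^4}.$$
   Context: ${\rm low}(A)$ is the strictly lower-triangular part of $A$; $[A,B]=AB-BA$; $\|\cdot\|$ is the Frobenius norm; $\kappa(V)=\sigma_{\max}(V)/\sigma_{\min}(V)$. *)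

theory Defs
  imports "HOL-Analysis.Analysis"
begin

definition low :: "((real, 'd::{finite,linorder}) vec, 'd) vec \<Rightarrow> ((real, 'd::{finite,linorder}) vec, 'd) vec" where
  "low A = (\<chi> i j. if j < i then A $ i $ j else 0)"

definition commutator :: "real^('d::finite)^('d::finite) \<Rightarrow> real^('d::finite)^('d::finite) \<Rightarrow> real^('d::finite)^('d::finite)" where
  "commutator A B = A ** B - B ** A"

definition diag_mat :: "('d::finite \<Rightarrow> real) \<Rightarrow> real^('d::finite)^('d::finite)" where
  "diag_mat l = (\<chi> i j. if i = j then l i else 0)"

definition frob_norm :: "real^('d::finite)^('d::finite) \<Rightarrow> real" where
  "frob_norm A = sqrt (\<Sum>i\<in>UNIV. \<Sum>j\<in>UNIV. (A $ i $ j)^2)"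

definition skew_symmetric :: "real^('d::finite)^('d::finite) \<Rightarrow> bool" where
  "skew_symmetric X \<longleftrightarrow> transpose X = - X"

text \<open>Largest and smallest singular value via their variational characterisation
  (operator 2-norm, and minimum of norm(Vx) over unit vectors).\<close>
definition sigma_max :: "real^('d::finite)^('d::finite) \<Rightarrow> real" where
  "sigma_max V = onorm (\<lambda>x. V *v x)"

definition sigma_min :: "real^('d::finite)^('d::finite) \<Rightarrow> real" where
  "sigma_min V = Inf {norm (V *v x) | x. norm x = 1}"

definition cond_num :: "real^('d::finite)^('d::finite) \<Rightarrow> real" where
  "cond_num V = sigma_max V / sigma_min V"

end

theory Submission
  imports Defs
begin

text \<open>Put T_n = U_0^T M_n U_0 and W = U_0^T V, so that T_n W = W diag(\<Lambda>_n) with every T_n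
  upper triangular. If \<gamma> > 0 the joint eigenvalues (\<Lambda>_nj)_n are pairwise distinct, so the
  row of the last nonzero entry of column j of W determines j; permuting the columns of W
  accordingly gives an upper triangular R with T_n = R D_n R^-1, where D_n is diagonal,
  R^-1 is again upper triangular, |R| \<le> \<sigma>_max(V) and |R^-1| \<le> 1/\<sigma>_min(V).
  On strictly lower triangular matrices Y \<mapsto> Z = low(R^-1 Y R) is then inverted by
  Z \<mapsto> low(R Z R^-1), and low[T_n, Y] = low(R [D_n, Z] R^-1). Each of these conjugations
  changes the squared Frobenius norm by at most \<kappa>(V)^2, while entrywise
  \<Sum>_n |[D_n, Z]|^2 \<ge> \<gamma> |Z|^2. Finally a skew-symmetric X enters low[T_n, X] only through
  Y = low X, and |X|^2 = 2 |Y|^2.\<close>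

section \<open>Triangular matrices\<close>

definition upper_triangular ::
    "'a::zero^('n::{finite,linorder})^('n::{finite,linorder}) \<Rightarrow> bool" where
  "upper_triangular A \<longleftrightarrow> (\<forall>i j. j < i \<longrightarrow> A $ i $ j = 0)"

lemma matrix_diff_ldistrib: "(A::'a::ring_1^'n^'m) ** (B - C) = A ** B - A ** C"
  by (simp add: matrix_matrix_mult_def vec_eq_iff sum_subtractf algebra_simps)

lemma matrix_diff_rdistrib: "((A::'a::ring_1^'n^'m) - B) ** C = A ** C - B ** C"
  by (simp add: matrix_matrix_mult_def vec_eq_iff sum_subtractf algebra_simps)

lemma upper_triangular_mult_nth:
  fixes T :: "'a::semiring_1^('n::{finite,linorder})^('n::{finite,linorder})"
    and W :: "'a^'m::finite^('n::{finite,linorder})"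
  assumes "upper_triangular T" "\<And>k. r < k \<Longrightarrow> W $ k $ c = 0"
  shows "(T ** W) $ r $ c = T $ r $ r * W $ r $ c"
proof -
  have summand: "T $ r $ k * W $ k $ c = (if k = r then T $ r $ r * W $ r $ c else 0)" for k
  proof (cases k r rule: linorder_cases)
    case less then show ?thesis using assms(1) by (simp add: upper_triangular_def)
  next
    case greater then show ?thesis using assms(2) by simp
  qed simp
  have "(\<Sum>k\<in>UNIV. T $ r $ k * W $ k $ c)
      = (\<Sum>k\<in>UNIV. if k = r then T $ r $ r * W $ r $ c else 0)"
    by (rule sum.cong[OF refl summand])
  then show ?thesis by (simp add: matrix_matrix_mult_def)
qed

lemma upper_triangular_mult:
  fixes A B :: "'a::semiring_1^('n::{finite,linorder})^('n::{finite,linorder})"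
  assumes "upper_triangular A" "upper_triangular B"
  shows "upper_triangular (A ** B)"
  unfolding upper_triangular_def
proof (intro allI impI)
  fix i j :: 'n assume "j < i"
  have "A $ i $ k * B $ k $ j = 0" for k
  proof (cases "k < i")
    case True then show ?thesis using assms(1) by (simp add: upper_triangular_def)
  next
    case False then show ?thesis using assms(2) \<open>j < i\<close> by (simp add: upper_triangular_def)
  qed
  then show "(A ** B) $ i $ j = 0" by (simp add: matrix_matrix_mult_def)
qed

lemma upper_triangular_diff:
  fixes A B :: "'a::group_add^('n::{finite,linorder})^('n::{finite,linorder})"
  shows "upper_triangular A \<Longrightarrow> upper_triangular B \<Longrightarrow> upper_triangular (A - B)"
  by (simp add: upper_triangular_def)

lemma upper_triangular_right_inverse:
  fixes R Ri :: "'a::field^('n::{finite,linorder})^('n::{finite,linorder})"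
  assumes "upper_triangular R" "\<And>i. R $ i $ i \<noteq> 0" "R ** Ri = mat 1"
  shows "upper_triangular Ri"
  unfolding upper_triangular_def
proof (intro allI impI)
  fix i j :: 'n assume "j < i"
  show "Ri $ i $ j = 0"
  proof (rule ccontr)
    assume "Ri $ i $ j \<noteq> 0"
    define m where "m = Max {k. j < k \<and> Ri $ k $ j \<noteq> 0}"
    have "m \<in> {k. j < k \<and> Ri $ k $ j \<noteq> 0}"
      unfolding m_def using \<open>j < i\<close> \<open>Ri $ i $ j \<noteq> 0\<close> by (intro Max_in) auto
    then have m: "j < m" "Ri $ m $ j \<noteq> 0" by auto
    have "Ri $ k $ j = 0" if "m < k" for k
    proof (rule ccontr)
      assume "Ri $ k $ j \<noteq> 0"
      then have "k \<le> m" unfolding m_def using m(1) that by (intro Max_ge) auto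
      with that show False by simp
    qed
    then have "(R ** Ri) $ m $ j = R $ m $ m * Ri $ m $ j"
      by (rule upper_triangular_mult_nth[OF assms(1)])
    moreover have "(R ** Ri) $ m $ j = 0"
      using assms(3) m(1) by (simp add: mat_def)
    ultimately show False using assms(2) m(2) by simp
  qed
qed

lemma low_nth [simp]: "low A $ i $ j = (if j < i then A $ i $ j else 0)"
  by (simp add: low_def)

lemma low_low [simp]: "low (low A) = low A"
  by (simp add: vec_eq_iff)

lemma low_diff: "low (A - B) = low A - low B"
  by (simp add: vec_eq_iff)

lemma low_eq_0_iff_upper_triangular: "low A = 0 \<longleftrightarrow> upper_triangular A"
  by (auto simp: upper_triangular_def vec_eq_iff)

lemma upper_triangular_diff_low: "upper_triangular (A - low A)"
  by (simp add: upper_triangular_def)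

lemma upper_triangular_transpose_low: "upper_triangular (transpose (low A))"
  by (auto simp: upper_triangular_def transpose_def)

lemma upper_triangular_commutator:
  "upper_triangular A \<Longrightarrow> upper_triangular B \<Longrightarrow> upper_triangular (commutator A B)"
  by (simp add: commutator_def upper_triangular_diff upper_triangular_mult)

lemma matrix_mult_diag_mat_nth: "(A ** diag_mat l) $ i $ j = A $ i $ j * l j"
proof -
  have "(\<Sum>k\<in>UNIV. A $ i $ k * (if k = j then l k else 0))
      = (\<Sum>k\<in>UNIV. if k = j then A $ i $ j * l j else 0)"
    by (rule sum.cong) auto
  then show ?thesis by (simp add: matrix_matrix_mult_def diag_mat_def)
qed

lemma diag_mat_mult_nth: "(diag_mat l ** A) $ i $ j = l i * A $ i $ j"
proof -
  have "(\<Sum>k\<in>UNIV. (if i = k then l i else 0) * A $ k $ j)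
      = (\<Sum>k\<in>UNIV. if k = i then l i * A $ i $ j else 0)"
    by (rule sum.cong) auto
  then show ?thesis by (simp add: matrix_matrix_mult_def diag_mat_def)
qed

lemma commutator_diag_mat_nth: "commutator (diag_mat l) A $ i $ j = (l i - l j) * A $ i $ j"
  by (simp add: commutator_def diag_mat_mult_nth matrix_mult_diag_mat_nth algebra_simps)

lemma upper_triangular_diag_mat: "upper_triangular (diag_mat l)"
  by (simp add: upper_triangular_def diag_mat_def)

definition perm_matrix :: "('n::finite \<Rightarrow> 'n) \<Rightarrow> real^'n^'n" where
  "perm_matrix p = (\<chi> i j. if i = p j then 1 else 0)"

lemma matrix_mult_perm_matrix_nth: "(A ** perm_matrix p) $ i $ j = A $ i $ p j"
proof -
  have "(\<Sum>k\<in>UNIV. A $ i $ k * (if k = p j then 1 else 0))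
      = (\<Sum>k\<in>UNIV. if k = p j then A $ i $ p j else 0)"
    by (rule sum.cong) auto
  then show ?thesis by (simp add: matrix_matrix_mult_def perm_matrix_def)
qed

lemma orthogonal_matrix_perm_matrix:
  assumes "inj p" shows "orthogonal_matrix (perm_matrix p)"
  unfolding orthogonal_matrix vec_eq_iff matrix_mult_perm_matrix_nth
  using assms by (simp add: mat_def transpose_def perm_matrix_def inj_eq)

lemma transpose_perm_matrix_diag_mat:
  assumes "inj p"
  shows "transpose (perm_matrix p) ** diag_mat l ** perm_matrix p = diag_mat (l \<circ> p)"
  unfolding vec_eq_iff matrix_mult_perm_matrix_nth matrix_mult_diag_mat_nth
  using assms by (simp add: transpose_def perm_matrix_def diag_mat_def inj_eq)

section \<open>Frobenius norm and operator bounds\<close>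

definition frob_norm_sq :: "real^'n::finite^'m::finite \<Rightarrow> real" where
  "frob_norm_sq A = (\<Sum>i\<in>UNIV. \<Sum>j\<in>UNIV. (A $ i $ j)^2)"

lemma frob_norm_sq_nonneg: "0 \<le> frob_norm_sq A"
  by (simp add: frob_norm_sq_def sum_nonneg)

lemma frob_norm_power2: "frob_norm A ^ 2 = frob_norm_sq A"
  by (simp add: frob_norm_def frob_norm_sq_def sum_nonneg)

lemma trace_transpose_mult_self: "trace (transpose A ** A) = frob_norm_sq A"
  unfolding trace_def frob_norm_sq_def matrix_matrix_mult_def transpose_def
  by (simp add: power2_eq_square) (rule sum.swap)

lemma frob_norm_sq_transpose: "frob_norm_sq (transpose A) = frob_norm_sq A"
  unfolding frob_norm_sq_def transpose_def by simp (rule sum.swap)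

lemma frob_norm_sq_low_le: "frob_norm_sq (low A) \<le> frob_norm_sq A"
  unfolding frob_norm_sq_def by (intro sum_mono) auto

lemma frob_norm_sq_columns: "frob_norm_sq A = (\<Sum>j\<in>UNIV. norm (column j A) ^ 2)"
  unfolding frob_norm_sq_def column_def norm_vec_def L2_set_def
  by (simp add: sum_nonneg) (rule sum.swap)

lemma frob_norm_sq_mult_left_le:
  fixes M :: "real^'k^'m" and A :: "real^'n^'k"
  assumes "\<And>y. norm (M *v y) \<le> s * norm y"
  shows "frob_norm_sq (M ** A) \<le> s^2 * frob_norm_sq A"
proof -
  have "norm (column j (M ** A)) ^ 2 \<le> s^2 * norm (column j A) ^ 2" for j
  proof -
    have "column j (M ** A) = M *v column j A"
      by (simp add: vec_eq_iff column_def matrix_matrix_mult_def matrix_vector_mult_def)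
    then have "norm (column j (M ** A)) \<le> s * norm (column j A)"
      using assms by simp
    then show ?thesis
      by (metis norm_ge_zero power_mono power_mult_distrib)
  qed
  then show ?thesis
    unfolding frob_norm_sq_columns by (simp add: sum_distrib_left sum_mono)
qed

lemma norm_transpose_mult_le:
  fixes M :: "real^'n^'m"
  assumes "\<And>y. norm (M *v y) \<le> s * norm y"
  shows "norm (transpose M *v x) \<le> s * norm x"
proof -
  define z where "z = transpose M *v x"
  have "z = x v* M"
    unfolding z_def using vector_transpose_matrix[of x "transpose M"] by simp
  then have "norm z ^ 2 = x \<bullet> (M *v z)"
    by (simp add: power2_norm_eq_inner dot_lmul_matrix)
  also have "\<dots> \<le> norm x * (s * norm z)"
    using norm_cauchy_schwarz[of x "M *v z"] mult_left_mono[OF assms[of z], of "norm x"]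
    by simp
  finally have "norm z * norm z \<le> (s * norm x) * norm z"
    by (simp add: power2_eq_square algebra_simps)
  moreover have "0 \<le> s"
    using order_trans[OF norm_ge_zero assms[of "axis undefined 1"]] by simp
  ultimately show ?thesis
    unfolding z_def[symmetric] by (cases "z = 0") (auto simp: mult_le_cancel_right)
qed

lemma frob_norm_sq_mult_right_le:
  fixes M :: "real^'k^'n" and A :: "real^'n^'m"
  assumes "\<And>y. norm (M *v y) \<le> s * norm y"
  shows "frob_norm_sq (A ** M) \<le> s^2 * frob_norm_sq A"
  using frob_norm_sq_mult_left_le[of "transpose M" s "transpose A", OF norm_transpose_mult_le[OF assms]]
  by (simp add: frob_norm_sq_transpose matrix_transpose_mul[symmetric])

lemma frob_norm_sq_mult3_le:
  fixes A :: "real^'k^'m" and B :: "real^'l^'k" and C :: "real^'n^'l"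
  assumes "\<And>y. norm (A *v y) \<le> a * norm y" "\<And>y. norm (C *v y) \<le> c * norm y"
  shows "frob_norm_sq (A ** B ** C) \<le> (a * c)^2 * frob_norm_sq B"
proof -
  have "frob_norm_sq (A ** B ** C) \<le> c^2 * frob_norm_sq (A ** B)"
    by (rule frob_norm_sq_mult_right_le[OF assms(2)])
  also have "\<dots> \<le> c^2 * (a^2 * frob_norm_sq B)"
    by (intro mult_left_mono frob_norm_sq_mult_left_le[OF assms(1)]) simp
  finally show ?thesis by (simp add: algebra_simps)
qed

lemma norm_mult_le_sigma_max: "norm (V *v x) \<le> sigma_max V * norm x"
  unfolding sigma_max_def using onorm[OF matrix_vector_mul_bounded_linear[of V]] by simp

lemma sigma_min_mult_le_norm: "sigma_min V * norm x \<le> norm (V *v x)"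
proof (cases "x = 0")
  case False
  have "sigma_min V \<le> norm (V *v sgn x)"
    unfolding sigma_min_def
  proof (rule cInf_lower)
    show "norm (V *v sgn x) \<in> {norm (V *v x) |x. norm x = 1}"
      using False by (auto simp: norm_sgn)
  qed (auto intro: bdd_belowI[of _ 0])
  also have "V *v sgn x = (1 / norm x) *\<^sub>R (V *v x)"
    by (simp add: sgn_div_norm matrix_vector_mult_scaleR divide_inverse_commute)
  finally show ?thesis
    using False by (simp add: pos_le_divide_eq)
qed simp

lemma sigma_min_le_sigma_max: "sigma_min (V :: real^'n::finite^'n::finite) \<le> sigma_max V"
  using order_trans[OF sigma_min_mult_le_norm norm_mult_le_sigma_max, of V "axis (undefined :: 'n) 1"]
  by simp

lemma sigma_min_pos:
  fixes V :: "real^'n::finite^'n::finite"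
  assumes "invertible V"
  shows "0 < sigma_min V"
proof -
  obtain Vi where Vi: "Vi ** V = mat 1"
    using assms invertible_def by blast
  have unit: "1 \<le> sigma_max Vi * norm (V *v x)" if "norm x = 1" for x
  proof -
    have "norm x = norm (Vi *v (V *v x))"
      by (simp add: matrix_vector_mul_assoc Vi)
    with that show ?thesis
      using norm_mult_le_sigma_max[of Vi "V *v x"] by simp
  qed
  have "0 \<le> sigma_max Vi"
    unfolding sigma_max_def by (rule onorm_pos_le[OF matrix_vector_mul_bounded_linear])
  with unit[of "axis undefined 1"] have "0 < sigma_max Vi"
    by (cases "sigma_max Vi = 0") auto
  have "1 / sigma_max Vi \<le> sigma_min V"
    unfolding sigma_min_def
  proof (rule cInf_greatest)
    show "{norm (V *v x) |x. norm x = 1} \<noteq> {}"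
      using norm_axis_1 by blast
  qed (use unit \<open>0 < sigma_max Vi\<close> in \<open>auto simp: divide_le_eq mult.commute\<close>)
  with \<open>0 < sigma_max Vi\<close> show ?thesis
    by (meson divide_pos_pos less_le_trans zero_less_one)
qed

lemma cond_num_pos: "invertible V \<Longrightarrow> 0 < cond_num V"
  unfolding cond_num_def
  using sigma_min_pos[of V] sigma_min_le_sigma_max[of V] by simp

lemma norm_orthogonal_matrix_mult:
  "orthogonal_matrix (U :: real^'n^'n) \<Longrightarrow> norm (U *v x) = norm x"
  using orthogonal_transformation_matrix[of "(*v) U"]
  by (simp add: orthogonal_transformation)

lemma skew_symmetric_nth:
  assumes "skew_symmetric X" shows "X $ j $ i = - X $ i $ j"
proof -
  have "transpose X $ i $ j = (- X) $ i $ j"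
    using assms by (simp add: skew_symmetric_def)
  then show ?thesis by (simp add: transpose_def)
qed

lemma skew_symmetric_eq_low:
  assumes "skew_symmetric X"
  shows "X = low X - transpose (low X)"
  unfolding vec_eq_iff
proof (intro allI)
  fix i j
  show "X $ i $ j = (low X - transpose (low X)) $ i $ j"
    using skew_symmetric_nth[OF assms, of i j] skew_symmetric_nth[OF assms, of i i]
    by (cases i j rule: linorder_cases) (auto simp: transpose_def)
qed

lemma frob_norm_sq_skew_symmetric:
  assumes "skew_symmetric X"
  shows "frob_norm_sq X = 2 * frob_norm_sq (low X)"
proof -
  have "(X $ i $ j)^2 = (low X $ i $ j)^2 + (transpose (low X) $ i $ j)^2" for i j
    using skew_symmetric_nth[OF assms, of i j] skew_symmetric_nth[OF assms, of i i]
    by (cases i j rule: linorder_cases) (auto simp: transpose_def)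
  then have "frob_norm_sq X = frob_norm_sq (low X) + frob_norm_sq (transpose (low X))"
    unfolding frob_norm_sq_def by (simp add: sum.distrib)
  then show ?thesis by (simp add: frob_norm_sq_transpose)
qed

lemma low_commutator_skew_symmetric:
  assumes "upper_triangular T" "skew_symmetric X"
  shows "low (commutator T X) = low (commutator T (low X))"
proof -
  have "commutator T X = commutator T (low X) - commutator T (transpose (low X))"
    by (subst skew_symmetric_eq_low[OF assms(2)])
       (simp add: commutator_def matrix_diff_ldistrib matrix_diff_rdistrib)
  moreover have "low (commutator T (transpose (low X))) = 0"
    by (simp add: low_eq_0_iff_upper_triangular upper_triangular_commutator assms(1)
        upper_triangular_transpose_low)
  ultimately show ?thesis by (simp add: low_diff)
qed

section \<open>Commutators with a triangularised family\<close>

lemma low_conj_low_inverse: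
  assumes "upper_triangular A" "upper_triangular Ai" "A ** Ai = mat 1" "low B = B"
  shows "low (A ** low (Ai ** B ** A) ** Ai) = B"
proof -
  define C where "C = Ai ** B ** A"
  have "A ** C ** Ai = (A ** Ai) ** B ** (A ** Ai)"
    by (simp add: C_def matrix_mul_assoc)
  then have "A ** C ** Ai = B"
    using assms(3) by simp
  then have "A ** low C ** Ai = B - A ** (C - low C) ** Ai"
    by (simp add: matrix_diff_ldistrib matrix_diff_rdistrib)
  moreover have "low (A ** (C - low C) ** Ai) = 0"
    by (simp add: low_eq_0_iff_upper_triangular upper_triangular_mult assms(1,2)
        upper_triangular_diff_low)
  ultimately show ?thesis
    using assms(4) by (simp add: low_diff C_def)
qed

lemma low_commutator_conj:
  assumes "upper_triangular T" "upper_triangular R" "upper_triangular Ri" "R ** Ri = mat 1"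
    and "T = R ** D ** Ri" "low Y = Y"
  shows "low (commutator T Y) = low (R ** commutator D (low (Ri ** Y ** R)) ** Ri)"
proof -
  define Z where "Z = low (Ri ** Y ** R)"
  define Q where "Q = R ** Z ** Ri"
  have RiR: "Ri ** R = mat 1"
    using assms(4) matrix_left_right_inverse by blast
  (* Q agrees with Y below the diagonal, and the upper triangular difference
     does not contribute to the lower part of the commutator with T. *)
  have "upper_triangular (Q - Y)"
    using low_conj_low_inverse[OF assms(2-4,6)] upper_triangular_diff_low[of Q]
    by (simp add: Q_def Z_def)
  then have "low (commutator T (Q - Y)) = 0"
    by (simp add: low_eq_0_iff_upper_triangular upper_triangular_commutator assms(1))
  moreover have "commutator T Q = R ** commutator D Z ** Ri"
  proof -
    have "T ** Q = R ** D ** (Ri ** R) ** Z ** Ri" "Q ** T = R ** Z ** (Ri ** R) ** D ** Ri"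
      unfolding assms(5) Q_def by (simp_all add: matrix_mul_assoc)
    then show ?thesis
      by (simp add: commutator_def RiR matrix_diff_ldistrib matrix_diff_rdistrib matrix_mul_assoc)
  qed
  moreover have "commutator T Y = commutator T Q - commutator T (Q - Y)"
    by (simp add: commutator_def matrix_diff_ldistrib matrix_diff_rdistrib)
  ultimately show ?thesis
    by (simp add: low_diff Z_def)
qed

lemma frob_norm_sq_commutator_diag_mat_ge:
  assumes "\<And>i. Z $ i $ i = 0" "\<And>i j. i \<noteq> j \<Longrightarrow> \<gamma> \<le> (\<Sum>n\<in>S. (d n i - d n j)^2)"
  shows "\<gamma> * frob_norm_sq Z \<le> (\<Sum>n\<in>S. frob_norm_sq (commutator (diag_mat (d n)) Z))"
proof -
  have entry: "\<gamma> * (Z $ i $ j)^2 \<le> (\<Sum>n\<in>S. (commutator (diag_mat (d n)) Z $ i $ j)^2)" for i j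
  proof (cases "i = j")
    case False
    then have "(Z $ i $ j)^2 * \<gamma> \<le> (Z $ i $ j)^2 * (\<Sum>n\<in>S. (d n i - d n j)^2)"
      by (intro mult_left_mono assms(2)) simp_all
    then show ?thesis
      by (simp add: commutator_diag_mat_nth power_mult_distrib sum_distrib_left mult.commute)
  qed (simp add: assms(1) sum_nonneg)
  have "\<gamma> * frob_norm_sq Z = (\<Sum>i\<in>UNIV. \<Sum>j\<in>UNIV. \<gamma> * (Z $ i $ j)^2)"
    unfolding frob_norm_sq_def by (simp add: sum_distrib_left)
  also have "\<dots> \<le> (\<Sum>i\<in>UNIV. \<Sum>j\<in>UNIV. \<Sum>n\<in>S. (commutator (diag_mat (d n)) Z $ i $ j)^2)"
    by (intro sum_mono entry)
  also have "\<dots> = (\<Sum>n\<in>S. frob_norm_sq (commutator (diag_mat (d n)) Z))"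
    unfolding frob_norm_sq_def by (subst sum.swap, subst (2) sum.swap) (rule refl)
  finally show ?thesis .
qed

lemma frob_norm_sq_low_commutator_ge:
  fixes R Ri Y :: "real^('n::{finite,linorder})^('n::{finite,linorder})"
  assumes R: "upper_triangular R" "upper_triangular Ri" "R ** Ri = mat 1"
    and T: "\<And>n. n \<in> S \<Longrightarrow> T n = R ** diag_mat (d n) ** Ri"
    and norm_R: "\<And>y. norm (R *v y) \<le> a * norm y"
    and norm_Ri: "\<And>y. norm (Ri *v y) \<le> c * norm y"
    and gap: "\<And>i j. i \<noteq> j \<Longrightarrow> \<gamma> \<le> (\<Sum>n\<in>S. (d n i - d n j)^2)" "0 \<le> \<gamma>"
    and Y: "low Y = Y"
  shows "\<gamma> * frob_norm_sq Y \<le> (a * c)^4 * (\<Sum>n\<in>S. frob_norm_sq (low (commutator (T n) Y)))"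
proof -
  define k where "k = (a * c)^2"
  define Z where "Z = low (Ri ** Y ** R)"
  define B where "B n = commutator (diag_mat (d n)) Z" for n
  have RiR: "Ri ** R = mat 1"
    using R(3) matrix_left_right_inverse by blast
  have "Y = low (R ** Z ** Ri)"
    unfolding Z_def using low_conj_low_inverse[OF R Y] by simp
  then have Y_le: "frob_norm_sq Y \<le> k * frob_norm_sq Z"
    using order_trans[OF frob_norm_sq_low_le frob_norm_sq_mult3_le[OF norm_R norm_Ri]]
    by (simp add: k_def)
  have B_le: "frob_norm_sq (B n) \<le> k * frob_norm_sq (low (commutator (T n) Y))" if "n \<in> S" for n
  proof -
    have "upper_triangular (T n)"
      by (simp add: T[OF that] upper_triangular_mult upper_triangular_diag_mat R(1,2))
    then have "low (commutator (T n) Y) = low (R ** B n ** Ri)"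
      unfolding B_def Z_def by (rule low_commutator_conj[OF _ R T[OF that] Y])
    moreover have "low (B n) = B n"
      by (simp add: B_def vec_eq_iff commutator_diag_mat_nth Z_def)
    ultimately have "B n = low (Ri ** low (commutator (T n) Y) ** R)"
      using low_conj_low_inverse[OF R(2,1) RiR] by simp
    then show ?thesis
      using order_trans[OF frob_norm_sq_low_le frob_norm_sq_mult3_le[OF norm_Ri norm_R]]
      by (simp add: k_def mult.commute)
  qed
  have Z_le: "\<gamma> * frob_norm_sq Z \<le> (\<Sum>n\<in>S. frob_norm_sq (B n))"
    unfolding B_def by (rule frob_norm_sq_commutator_diag_mat_ge) (simp_all add: Z_def gap)
  have "\<gamma> * frob_norm_sq Y \<le> k * (\<gamma> * frob_norm_sq Z)"
    using mult_left_mono[OF Y_le gap(2)] by (simp add: algebra_simps)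
  also have "\<dots> \<le> k * (\<Sum>n\<in>S. frob_norm_sq (B n))"
    by (intro mult_left_mono Z_le) (simp add: k_def)
  also have "\<dots> \<le> k * (\<Sum>n\<in>S. k * frob_norm_sq (low (commutator (T n) Y)))"
    by (intro mult_left_mono sum_mono B_le) (simp_all add: k_def)
  also have "\<dots> = (a * c)^4 * (\<Sum>n\<in>S. frob_norm_sq (low (commutator (T n) Y)))"
    by (simp add: k_def sum_distrib_left flip: power_add)
  finally show ?thesis .
qed

section \<open>Simultaneous triangularisation\<close>

lemma exists_perm_upper_triangular:
  fixes W Wi :: "real^('n::{finite,linorder})^('n::{finite,linorder})"
  assumes "Wi ** W = mat 1"
    and T_upper: "\<And>n. n \<in> S \<Longrightarrow> upper_triangular (T n)"
    and eigen: "\<And>n. n \<in> S \<Longrightarrow> T n ** W = W ** diag_mat (l n)"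
    and separating: "\<And>c c'. c \<noteq> c' \<Longrightarrow> \<exists>n\<in>S. l n c \<noteq> l n c'"
  obtains p where "inj p" "upper_triangular (W ** perm_matrix p)"
    "\<And>i. (W ** perm_matrix p) $ i $ i \<noteq> 0"
proof -
  define last_row where "last_row c = Max {k. W $ k $ c \<noteq> 0}" for c
  have "{k. W $ k $ c \<noteq> 0} \<noteq> {}" for c
  proof
    assume "{k. W $ k $ c \<noteq> 0} = {}"
    then have "(Wi ** W) $ c $ c = 0" by (simp add: matrix_matrix_mult_def)
    with assms(1) show False by (simp add: mat_def)
  qed
  then have last_row_nonzero: "W $ last_row c $ c \<noteq> 0" for c
    unfolding last_row_def using Max_in[of "{k. W $ k $ c \<noteq> 0}"] by auto
  have below_last_row: "W $ k $ c = 0" if "last_row c < k" for c k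
  proof (rule ccontr)
    assume "W $ k $ c \<noteq> 0"
    then have "k \<le> last_row c" unfolding last_row_def by (intro Max_ge) auto
    with that show False by simp
  qed
  (* Reading off entry (last_row c, c) of T W = W D shows that T n has the eigenvalue
     l n c in position last_row c, so the separation hypothesis makes last_row injective. *)
  have eigenvalue: "T n $ last_row c $ last_row c = l n c" if "n \<in> S" for n c
  proof -
    have "T n $ last_row c $ last_row c * W $ last_row c $ c = (T n ** W) $ last_row c $ c"
      by (rule upper_triangular_mult_nth[OF T_upper[OF that] below_last_row, symmetric])
    also have "\<dots> = W $ last_row c $ c * l n c"
      by (simp add: eigen[OF that] matrix_mult_diag_mat_nth)
    finally show ?thesis
      using last_row_nonzero[of c] by simp
  qed
  have "inj last_row"
  proof (rule injI, rule ccontr)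
    fix c c' assume "last_row c = last_row c'" "c \<noteq> c'"
    with separating eigenvalue show False by metis
  qed
  then have "bij last_row"
    by (simp add: bij_def finite_UNIV_inj_surj)
  define p where "p = inv last_row"
  have last_row_p: "last_row (p j) = j" for j
    unfolding p_def by (meson \<open>bij last_row\<close> bij_inv_eq_iff)
  show ?thesis
  proof
    show "inj p"
      unfolding p_def using \<open>bij last_row\<close> bij_imp_bij_inv bij_is_inj by blast
    show "upper_triangular (W ** perm_matrix p)"
      using below_last_row last_row_p by (simp add: upper_triangular_def matrix_mult_perm_matrix_nth)
    show "(W ** perm_matrix p) $ i $ i \<noteq> 0" for i
      using last_row_nonzero[of "p i"] by (simp add: matrix_mult_perm_matrix_nth last_row_p)
  qed
qed

lemma simultaneous_upper_triangular_form:
  fixes V U :: "real^('n::{finite,linorder})^('n::{finite,linorder})"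
  assumes "invertible V" "orthogonal_matrix U"
    and T: "\<And>n. n \<in> S \<Longrightarrow> T n = transpose U ** (V ** diag_mat (\<Lambda> n) ** matrix_inv V) ** U"
    and T_upper: "\<And>n. n \<in> S \<Longrightarrow> upper_triangular (T n)"
    and separating: "\<And>c c'. c \<noteq> c' \<Longrightarrow> \<exists>n\<in>S. \<Lambda> n c \<noteq> \<Lambda> n c'"
  obtains R Ri p where "inj p" "upper_triangular R" "upper_triangular Ri" "R ** Ri = mat 1"
    "\<And>n. n \<in> S \<Longrightarrow> T n = R ** diag_mat (\<Lambda> n \<circ> p) ** Ri"
    "\<And>y. norm (R *v y) \<le> sigma_max V * norm y" "\<And>y. sigma_min V * norm y \<le> norm (R *v y)"
proof -
  define W where "W = transpose U ** V"
  define Wi where "Wi = matrix_inv V ** U"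
  have V: "V ** matrix_inv V = mat 1 \<and> matrix_inv V ** V = mat 1"
    using assms(1) unfolding invertible_def matrix_inv_def by (rule someI_ex)
  have "Wi ** W = matrix_inv V ** (U ** transpose U) ** V"
    by (simp add: W_def Wi_def matrix_mul_assoc)
  with V assms(2) have WiW: "Wi ** W = mat 1"
    by (simp add: orthogonal_matrix_def)
  then have WWi: "W ** Wi = mat 1"
    by (simp add: matrix_left_right_inverse)
  have T_W: "T n = W ** diag_mat (\<Lambda> n) ** Wi" if "n \<in> S" for n
    by (simp add: T[OF that] W_def Wi_def matrix_mul_assoc)
  have eigen: "T n ** W = W ** diag_mat (\<Lambda> n)" if "n \<in> S" for n
    using WiW by (simp add: T_W[OF that] matrix_mul_assoc[symmetric])
  obtain p where p: "inj p" "upper_triangular (W ** perm_matrix p)"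
    "\<And>i. (W ** perm_matrix p) $ i $ i \<noteq> 0"
    by (rule exists_perm_upper_triangular[OF WiW T_upper eigen separating]) (assumption | rule that)+
  define P where "P = perm_matrix p"
  have P: "orthogonal_matrix P"
    unfolding P_def by (rule orthogonal_matrix_perm_matrix[OF p(1)])
  then have PPt: "P ** transpose P = mat 1"
    by (simp add: orthogonal_matrix_def)
  define R where "R = W ** P"
  define Ri where "Ri = transpose P ** Wi"
  have "R ** Ri = W ** (P ** transpose P) ** Wi"
    by (simp add: R_def Ri_def matrix_mul_assoc)
  with WWi PPt have RRi: "R ** Ri = mat 1"
    by simp
  show ?thesis
  proof
    show "inj p" by (fact p(1))
    show upper_R: "upper_triangular R"
      using p(2) by (simp add: R_def P_def)
    show "upper_triangular Ri"
      using upper_triangular_right_inverse[OF upper_R _ RRi] p(3) by (simp add: R_def P_def)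
    show "R ** Ri = mat 1" by (fact RRi)
    show "T n = R ** diag_mat (\<Lambda> n \<circ> p) ** Ri" if "n \<in> S" for n
    proof -
      have "R ** diag_mat (\<Lambda> n \<circ> p) ** Ri
          = W ** (P ** transpose P) ** diag_mat (\<Lambda> n) ** (P ** transpose P) ** Wi"
        unfolding R_def Ri_def P_def transpose_perm_matrix_diag_mat[OF p(1), symmetric]
        by (simp add: matrix_mul_assoc)
      then show ?thesis
        by (simp add: PPt T_W[OF that])
    qed
    have "R *v y = transpose U *v (V *v (P *v y))" for y
      by (simp add: R_def W_def matrix_vector_mul_assoc matrix_mul_assoc)
    then have R_apply: "norm (R *v y) = norm (V *v (P *v y))" for y
      using norm_orthogonal_matrix_mult[of "transpose U" "V *v (P *v y)"] assms(2) by simp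
    show "norm (R *v y) \<le> sigma_max V * norm y" for y
      using norm_mult_le_sigma_max[of V "P *v y"] norm_orthogonal_matrix_mult[OF P]
      by (simp add: R_apply)
    show "sigma_min V * norm y \<le> norm (R *v y)" for y
      using sigma_min_mult_le_norm[of V "P *v y"] norm_orthogonal_matrix_mult[OF P]
      by (simp add: R_apply)
  qed
qed

lemma Min_pairs_le:
  fixes f :: "'n::{finite,linorder} \<Rightarrow> 'n \<Rightarrow> 'a::linorder"
  assumes "\<And>i j. f i j = f j i" "i \<noteq> j"
  shows "Min {f j j' | j j'. j < j'} \<le> f i j"
proof (rule Min_le)
  show "finite {f j j' | j j'. j < j'}"
    by (rule finite_subset[of _ "(\<lambda>(j, j'). f j j') ` UNIV"]) auto
  show "f i j \<in> {f j j' | j j'. j < j'}"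
    using assms by (cases i j rule: linorder_cases) auto
qed

lemma frob_norm_sq_low_commutator_ge_cond_num:
  fixes V U Y :: "real^('n::{finite,linorder})^('n::{finite,linorder})"
  assumes V: "invertible V" and U: "orthogonal_matrix U"
    and T: "\<And>n. n \<in> S \<Longrightarrow> T n = transpose U ** (V ** diag_mat (\<Lambda> n) ** matrix_inv V) ** U"
    and T_upper: "\<And>n. n \<in> S \<Longrightarrow> upper_triangular (T n)"
    and gap: "\<And>i j. i \<noteq> j \<Longrightarrow> \<gamma> \<le> (\<Sum>n\<in>S. (\<Lambda> n i - \<Lambda> n j)^2)"
    and Y: "low Y = Y"
  shows "\<gamma> * frob_norm_sq Y \<le> cond_num V ^ 4 * (\<Sum>n\<in>S. frob_norm_sq (low (commutator (T n) Y)))"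
proof (cases "\<gamma> \<le> 0")
  case True
  have "0 \<le> cond_num V ^ 4 * (\<Sum>n\<in>S. frob_norm_sq (low (commutator (T n) Y)))"
    by (intro mult_nonneg_nonneg sum_nonneg frob_norm_sq_nonneg) simp
  moreover have "\<gamma> * frob_norm_sq Y \<le> 0"
    using True frob_norm_sq_nonneg by (rule mult_nonpos_nonneg)
  ultimately show ?thesis by linarith
next
  case False
  have separating: "\<exists>n\<in>S. \<Lambda> n c \<noteq> \<Lambda> n c'" if "c \<noteq> c'" for c c'
  proof (rule ccontr)
    assume "\<not> (\<exists>n\<in>S. \<Lambda> n c \<noteq> \<Lambda> n c')"
    then have "(\<Sum>n\<in>S. (\<Lambda> n c - \<Lambda> n c')^2) = 0" by simp
    with gap[OF that] False show False by simp
  qed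
  obtain R Ri p where p: "inj p"
    and R: "upper_triangular R" "upper_triangular Ri" "R ** Ri = mat 1"
    and T_R: "\<And>n. n \<in> S \<Longrightarrow> T n = R ** diag_mat (\<Lambda> n \<circ> p) ** Ri"
    and norm_R: "\<And>y. norm (R *v y) \<le> sigma_max V * norm y"
      "\<And>y. sigma_min V * norm y \<le> norm (R *v y)"
    by (rule simultaneous_upper_triangular_form[OF V U T T_upper separating])
       (assumption | rule that)+
  have "0 < sigma_min V" by (rule sigma_min_pos[OF V])
  have norm_Ri: "norm (Ri *v y) \<le> (1 / sigma_min V) * norm y" for y
    using norm_R(2)[of "Ri *v y"] \<open>0 < sigma_min V\<close>
    by (simp add: matrix_vector_mul_assoc R(3) field_simps)
  have gap_p: "\<gamma> \<le> (\<Sum>n\<in>S. ((\<Lambda> n \<circ> p) i - (\<Lambda> n \<circ> p) j)^2)"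
    if "i \<noteq> j" for i j
    using gap[of "p i" "p j"] p that by (simp add: inj_eq)
  have "\<gamma> * frob_norm_sq Y
      \<le> (sigma_max V * (1 / sigma_min V))^4 * (\<Sum>n\<in>S. frob_norm_sq (low (commutator (T n) Y)))"
    by (rule frob_norm_sq_low_commutator_ge[OF R T_R norm_R(1) norm_Ri gap_p _ Y])
       (use False in simp_all)
  then show ?thesis by (simp add: cond_num_def)
qed

theorem lemma10:
  fixes V U0 :: "((real, 'd::{finite,linorder}) vec, 'd) vec"
    and \<Lambda> :: "nat \<Rightarrow> 'd \<Rightarrow> real"
    and M :: "nat \<Rightarrow> ((real, 'd) vec, 'd) vec"
    and N :: nat
    and X :: "((real, 'd) vec, 'd) vec"
  assumes "invertible V"
    and "\<And>n. n \<in> {1..N} \<Longrightarrow> M n = V ** diag_mat (\<Lambda> n) ** matrix_inv V"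
    and "orthogonal_matrix U0"
    and "\<And>n. n \<in> {1..N} \<Longrightarrow> low (transpose U0 ** M n ** U0) = 0"
    and "skew_symmetric X"
  shows "(\<Sum>n=1..N. trace (transpose (low (commutator (transpose U0 ** M n ** U0) X))
                         ** low (commutator (transpose U0 ** M n ** U0) X)))
         \<ge> (Min {(\<Sum>n=1..N. (\<Lambda> n j - \<Lambda> n j')^2) | j j'. j < j'} / (2 * cond_num V ^ 4))
            * (frob_norm X)^2"
proof -
  define T where "T n = transpose U0 ** M n ** U0" for n
  define \<gamma> where "\<gamma> = Min {(\<Sum>n=1..N. (\<Lambda> n j - \<Lambda> n j')^2) | j j'. j < j'}"
  have T_upper: "upper_triangular (T n)" if "n \<in> {1..N}" for n
    using assms(4)[OF that] by (simp add: T_def low_eq_0_iff_upper_triangular)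
  have "\<gamma> * frob_norm_sq (low X)
      \<le> cond_num V ^ 4 * (\<Sum>n=1..N. frob_norm_sq (low (commutator (T n) (low X))))"
  proof (rule frob_norm_sq_low_commutator_ge_cond_num[OF assms(1,3) _ T_upper])
    show "T n = transpose U0 ** (V ** diag_mat (\<Lambda> n) ** matrix_inv V) ** U0" if "n \<in> {1..N}" for n
      by (simp add: T_def assms(2)[OF that])
    show "\<gamma> \<le> (\<Sum>n=1..N. (\<Lambda> n i - \<Lambda> n j)^2)" if "i \<noteq> j" for i j
      unfolding \<gamma>_def
      by (rule Min_pairs_le[of "\<lambda>j j'. \<Sum>n=1..N. (\<Lambda> n j - \<Lambda> n j')^2", OF _ that])
         (simp add: power2_commute)
  qed simp_all
  moreover have "(\<Sum>n=1..N. frob_norm_sq (low (commutator (T n) (low X))))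
      = (\<Sum>n=1..N. trace (transpose (low (commutator (T n) X)) ** low (commutator (T n) X)))"
    by (rule sum.cong)
       (simp_all add: trace_transpose_mult_self low_commutator_skew_symmetric[OF T_upper assms(5)])
  moreover have "\<gamma> / (2 * cond_num V ^ 4) * frob_norm X ^ 2 = \<gamma> * frob_norm_sq (low X) / cond_num V ^ 4"
    by (simp add: frob_norm_power2 frob_norm_sq_skew_symmetric[OF assms(5)])
  ultimately show ?thesis
    using cond_num_pos[OF assms(1)] by (simp add: T_def \<gamma>_def pos_divide_le_eq mult.commute)
qed

end
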